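(* If a $\sigma$-structure $\mathcal{A}$ has a $\mathfrak{g}$-guarded decomposition $\tau$, then (1) every maximal $\mathfrak{g}$-guarded subset of $A$ is $\lambda(p)$ for some $p \in P_{\tau}$; and (2) every clique in the Gaifman graph of $\mathcal{A}$ is $\mathfrak{g}$-guarded.
   Context: $\mathfrak{g}$ is atom, loose or clique guarding; $\mathfrak{g}$-guarded plays are non-empty lists of $\mathfrak{g}$-guarded sets, ordered by prefix $\sqsubseteq$, with $\lambda(p)$ the last element. For a focussed play $\langle p,a\rangle$ ($a\in\lambda(p)$), $[p,a]$ is its class under $\langle p,a\rangle\sim\langle q,a'\rangle$ iff $a=a'$, $p\sqcap q$ non-empty, and $a\in\lambda(u)$ for all $u$ on the prefix-order paths from $p\sqcap q$ to $p$ and $q$. A $\mathfrak{g}$-guarded decomposition of $\mathcal{A}$ is a map $\tau$ from $A$ to plays, with image $P_\tau$, that is reflexive ($a\in\lambda(\tau(a))$), edge covering (Gaifman-adjacent $a,b$ lie in some $\lambda(p)$, $p\in P_\tau$), minimal ($[\tau(a),a]=[q,a]$ implies $\tau(a)\sqsubseteq q$) and vertex connected (for $q$ below some element of $P_\tau$ with $a\in\lambda(q)$, $[\tau(a),a]=[q,a]$). *)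

theory Defs
  imports Main "HOL-Library.Sublist"
begin

text \<open>A sigma-structure: signature = relation symbols of type 'r with arity ar;
  universe A; interpretation R r, a set of tuples (lists) of length ar r over A.\<close>

definition sigma_structure :: "('r \<Rightarrow> nat) \<Rightarrow> 'a set \<Rightarrow> ('r \<Rightarrow> 'a list set) \<Rightarrow> bool" where
  "sigma_structure ar A R \<longleftrightarrow> (\<forall>r. \<forall>t\<in>R r. length t = ar r \<and> set t \<subseteq> A)"

definition gaifman_adj :: "('r \<Rightarrow> 'a list set) \<Rightarrow> 'a \<Rightarrow> 'a \<Rightarrow> bool" where
  "gaifman_adj R a b \<longleftrightarrow> a \<noteq> b \<and> (\<exists>r. \<exists>t\<in>R r. a \<in> set t \<and> b \<in> set t)"

definition gaifman_clique :: "'a set \<Rightarrow> ('r \<Rightarrow> 'a list set) \<Rightarrow> 'a set \<Rightarrow> bool" where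
  "gaifman_clique A R X \<longleftrightarrow> X \<noteq> {} \<and> X \<subseteq> A \<and>
     (\<forall>a\<in>X. \<forall>b\<in>X. a \<noteq> b \<longrightarrow> gaifman_adj R a b)"

datatype guarding = AtomG | LooseG | CliqueG

definition atom_guarded :: "'a set \<Rightarrow> ('r \<Rightarrow> 'a list set) \<Rightarrow> 'a set \<Rightarrow> bool" where
  "atom_guarded A R X \<longleftrightarrow> X \<noteq> {} \<and> X \<subseteq> A \<and>
     ((\<exists>a. X = {a}) \<or> (\<exists>r. \<exists>t\<in>R r. X \<subseteq> set t))"

definition loose_guarded :: "'a set \<Rightarrow> ('r \<Rightarrow> 'a list set) \<Rightarrow> 'a set \<Rightarrow> bool" where
  "loose_guarded A R X \<longleftrightarrow> X \<noteq> {} \<and> X \<subseteq> A \<and>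
     (\<forall>a\<in>X. \<forall>b\<in>X. \<exists>Y. atom_guarded A R Y \<and> a \<in> Y \<and> b \<in> Y)"

definition clique_guarded :: "'a set \<Rightarrow> ('r \<Rightarrow> 'a list set) \<Rightarrow> 'a set \<Rightarrow> bool" where
  "clique_guarded A R X \<longleftrightarrow> gaifman_clique A R X"

fun guarded :: "guarding \<Rightarrow> 'a set \<Rightarrow> ('r \<Rightarrow> 'a list set) \<Rightarrow> 'a set \<Rightarrow> bool" where
  "guarded AtomG A R X = atom_guarded A R X"
| "guarded LooseG A R X = loose_guarded A R X"
| "guarded CliqueG A R X = clique_guarded A R X"

definition maximal_guarded :: "guarding \<Rightarrow> 'a set \<Rightarrow> ('r \<Rightarrow> 'a list set) \<Rightarrow> 'a set \<Rightarrow> bool" where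
  "maximal_guarded g A R X \<longleftrightarrow> guarded g A R X \<and>
     (\<forall>Y. guarded g A R Y \<and> X \<subseteq> Y \<longrightarrow> Y = X)"

text \<open>A guarded play: non-empty list of guarded sets; order = prefix; lambda p = last p;
  meet p \<sqinter> q = longest common prefix.\<close>
definition guarded_play :: "guarding \<Rightarrow> 'a set \<Rightarrow> ('r \<Rightarrow> 'a list set) \<Rightarrow> 'a set list \<Rightarrow> bool" where
  "guarded_play g A R p \<longleftrightarrow> p \<noteq> [] \<and> (\<forall>X\<in>set p. guarded g A R X)"

definition lam :: "'a set list \<Rightarrow> 'a set" where
  "lam p = last p"

definition focus_sim :: "'a set list \<Rightarrow> 'a \<Rightarrow> 'a set list \<Rightarrow> 'a \<Rightarrow> bool" where
  "focus_sim p a q a' \<longleftrightarrow> a = a' \<and> longest_common_prefix p q \<noteq> [] \<and>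
     (\<forall>u. (prefix (longest_common_prefix p q) u \<and> prefix u p) \<or>
          (prefix (longest_common_prefix p q) u \<and> prefix u q) \<longrightarrow> a \<in> lam u)"

definition focus_class :: "guarding \<Rightarrow> 'a set \<Rightarrow> ('r \<Rightarrow> 'a list set) \<Rightarrow> 'a set list \<Rightarrow> 'a
    \<Rightarrow> ('a set list \<times> 'a) set" where
  "focus_class g A R p a = {(q, a'). guarded_play g A R q \<and> a' \<in> lam q \<and> focus_sim p a q a'}"

definition guarded_decomposition :: "guarding \<Rightarrow> 'a set \<Rightarrow> ('r \<Rightarrow> 'a list set)
    \<Rightarrow> ('a \<Rightarrow> 'a set list) \<Rightarrow> bool" where
  "guarded_decomposition g A R \<tau> \<longleftrightarrow>
     (\<forall>a\<in>A. guarded_play g A R (\<tau> a)) \<and>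
     \<comment> \<open>reflexive\<close>
     (\<forall>a\<in>A. a \<in> lam (\<tau> a)) \<and>
     \<comment> \<open>edge covering\<close>
     (\<forall>a\<in>A. \<forall>b\<in>A. gaifman_adj R a b \<longrightarrow> (\<exists>p\<in>\<tau> ` A. a \<in> lam p \<and> b \<in> lam p)) \<and>
     \<comment> \<open>minimal\<close>
     (\<forall>a\<in>A. \<forall>q. guarded_play g A R q \<and> a \<in> lam q \<and>
        focus_class g A R (\<tau> a) a = focus_class g A R q a \<longrightarrow> prefix (\<tau> a) q) \<and>
     \<comment> \<open>vertex connected\<close>
     (\<forall>a\<in>A. \<forall>q. \<forall>p\<in>\<tau> ` A. q \<noteq> [] \<and> prefix q p \<and> a \<in> lam q \<longrightarrow>
        focus_class g A R (\<tau> a) a = focus_class g A R q a)"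

end

theory Submission
  imports Defs
begin

text \<open>Every guarded set is a clique of the Gaifman graph. Conversely, a finite clique X lies
  in a single bag: take m \<in> X whose play \<tau> m is longest. For a \<in> X adjacent to m, edge
  covering gives a bag p containing both; vertex connectivity and minimality make \<tau> a and \<tau> m
  prefixes of p, and a lies in every bag between \<tau> a and p. As \<tau> a is a prefix of \<tau> m, this
  includes \<tau> m. Hence cliques are guarded (guardedness passes to non-empty subsets) and a
  maximal guarded set equals the bag containing it.\<close>

lemma longest_common_prefix_eq_if_prefix:
  "prefix xs ys \<Longrightarrow> longest_common_prefix xs ys = xs"
  by (metis longest_common_prefix_max_prefix longest_common_prefix_prefix1
      prefix_order.antisym prefix_order.refl)

lemma guarded_decompositionD:
  assumes "guarded_decomposition g A R \<tau>"
  shows "\<And>a. a \<in> A \<Longrightarrow> guarded_play g A R (\<tau> a)"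
    and "\<And>a. a \<in> A \<Longrightarrow> a \<in> lam (\<tau> a)"
    and "\<And>a b. a \<in> A \<Longrightarrow> b \<in> A \<Longrightarrow> gaifman_adj R a b \<Longrightarrow>
           \<exists>p\<in>\<tau> ` A. a \<in> lam p \<and> b \<in> lam p"
    and "\<And>a q. a \<in> A \<Longrightarrow> guarded_play g A R q \<Longrightarrow> a \<in> lam q \<Longrightarrow>
           focus_class g A R (\<tau> a) a = focus_class g A R q a \<Longrightarrow> prefix (\<tau> a) q"
    and "\<And>a q p. a \<in> A \<Longrightarrow> p \<in> \<tau> ` A \<Longrightarrow> q \<noteq> [] \<Longrightarrow> prefix q p \<Longrightarrow> a \<in> lam q \<Longrightarrow>
           focus_class g A R (\<tau> a) a = focus_class g A R q a"
  using assms unfolding guarded_decomposition_def by blast+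

lemma focus_class_self:
  assumes "guarded_play g A R p" and "a \<in> lam p"
  shows "(p, a) \<in> focus_class g A R p a"
proof -
  have "p \<noteq> []" using assms(1) by (simp add: guarded_play_def)
  then have "focus_sim p a p a"
    using assms(2) prefix_order.antisym
    by (auto simp: focus_sim_def longest_common_prefix_eq_if_prefix)
  then show ?thesis using assms by (simp add: focus_class_def)
qed

lemma decomposition_bag_above_root:
  assumes dec: "guarded_decomposition g A R \<tau>"
    and "a \<in> A" and p: "p \<in> \<tau> ` A" and "a \<in> lam p"
  shows "prefix (\<tau> a) p"
    and "\<And>u. prefix (\<tau> a) u \<Longrightarrow> prefix u p \<Longrightarrow> a \<in> lam u"
proof -
  have play: "guarded_play g A R p"
    using p guarded_decompositionD(1)[OF dec] by blast
  then have "p \<noteq> []" by (simp add: guarded_play_def)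
  then have same_class: "focus_class g A R (\<tau> a) a = focus_class g A R p a"
    using guarded_decompositionD(5)[OF dec] assms by blast
  show root_prefix: "prefix (\<tau> a) p"
    using guarded_decompositionD(4)[OF dec \<open>a \<in> A\<close> play \<open>a \<in> lam p\<close> same_class] .
  have "focus_sim (\<tau> a) a p a"
    using focus_class_self[OF play \<open>a \<in> lam p\<close>] same_class by (auto simp: focus_class_def)
  then show "\<And>u. prefix (\<tau> a) u \<Longrightarrow> prefix u p \<Longrightarrow> a \<in> lam u"
    by (auto simp: focus_sim_def longest_common_prefix_eq_if_prefix[OF root_prefix])
qed

lemma finite_gaifman_clique_in_bag:
  assumes dec: "guarded_decomposition g A R \<tau>"
    and "finite X" and clique: "gaifman_clique A R X"
  shows "\<exists>m\<in>A. X \<subseteq> lam (\<tau> m)"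
proof -
  have "X \<subseteq> A" "X \<noteq> {}" using clique by (auto simp: gaifman_clique_def)
  let ?depth = "Max ((\<lambda>x. length (\<tau> x)) ` X)"
  have "?depth \<in> (\<lambda>x. length (\<tau> x)) ` X"
    using \<open>finite X\<close> \<open>X \<noteq> {}\<close> by simp
  then obtain m where "m \<in> X" and "?depth = length (\<tau> m)"
    by (auto simp del: Max_in)
  moreover have "length (\<tau> x) \<le> ?depth" if "x \<in> X" for x
    using that \<open>finite X\<close> by simp
  ultimately have deepest: "length (\<tau> x) \<le> length (\<tau> m)" if "x \<in> X" for x
    using that by simp
  have "a \<in> lam (\<tau> m)" if "a \<in> X" for a
  proof (cases "a = m")
    case True
    then show ?thesis using guarded_decompositionD(2)[OF dec] \<open>m \<in> X\<close> \<open>X \<subseteq> A\<close> by blast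
  next
    case False
    have "a \<in> A" "m \<in> A" using \<open>a \<in> X\<close> \<open>m \<in> X\<close> \<open>X \<subseteq> A\<close> by auto
    moreover have "gaifman_adj R a m"
      using clique \<open>a \<in> X\<close> \<open>m \<in> X\<close> False by (simp add: gaifman_clique_def)
    ultimately obtain p where "p \<in> \<tau> ` A" "a \<in> lam p" "m \<in> lam p"
      using guarded_decompositionD(3)[OF dec] by blast
    note a_below = decomposition_bag_above_root[OF dec \<open>a \<in> A\<close> this(1,2)]
    have "prefix (\<tau> m) p"
      using decomposition_bag_above_root(1)[OF dec \<open>m \<in> A\<close> \<open>p \<in> \<tau> ` A\<close> \<open>m \<in> lam p\<close>] .
    moreover have "prefix (\<tau> a) (\<tau> m)"
      using prefix_length_prefix a_below(1) calculation deepest[OF \<open>a \<in> X\<close>] by blast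
    ultimately show ?thesis using a_below(2) by blast
  qed
  then show ?thesis using \<open>m \<in> X\<close> \<open>X \<subseteq> A\<close> by blast
qed

lemma decomposition_bag_guarded:
  "guarded_decomposition g A R \<tau> \<Longrightarrow> m \<in> A \<Longrightarrow> guarded g A R (lam (\<tau> m))"
  using guarded_decompositionD(1) by (fastforce simp: guarded_play_def lam_def)

lemma guarded_subset:
  assumes "guarded g A R Y" and "X \<subseteq> Y" and "X \<noteq> {}"
  shows "guarded g A R X"
proof (cases g)
  case AtomG
  then show ?thesis using assms
    by (simp add: atom_guarded_def) (metis subset_singletonD subset_trans)
next
  case LooseG
  then show ?thesis using assms by (simp add: loose_guarded_def) blast
next
  case CliqueG
  then show ?thesis using assms by (auto simp: clique_guarded_def gaifman_clique_def)
qed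

lemma guarded_imp_gaifman_clique:
  assumes "guarded g A R X"
  shows "gaifman_clique A R X"
proof (cases g)
  case AtomG
  then show ?thesis using assms
    by (auto simp: atom_guarded_def gaifman_clique_def gaifman_adj_def)
next
  case LooseG
  have "gaifman_adj R a b" if ab: "a \<in> X" "b \<in> X" "a \<noteq> b" for a b
  proof -
    obtain Y where "atom_guarded A R Y" "a \<in> Y" "b \<in> Y"
      using assms LooseG ab(1,2) by (simp add: loose_guarded_def) blast
    with \<open>a \<noteq> b\<close> show ?thesis by (auto simp: atom_guarded_def gaifman_adj_def)
  qed
  moreover have "X \<noteq> {}" "X \<subseteq> A" using assms LooseG by (simp_all add: loose_guarded_def)
  ultimately show ?thesis by (simp add: gaifman_clique_def)
next
  case CliqueG
  then show ?thesis using assms by (simp add: clique_guarded_def)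
qed

theorem proposition4p4:
  fixes g :: guarding and ar :: "'r \<Rightarrow> nat" and A :: "'a set"
    and R :: "'r \<Rightarrow> 'a list set" and \<tau> :: "'a \<Rightarrow> 'a set list"
  assumes "sigma_structure ar A R"
    and "finite A"
    and "guarded_decomposition g A R \<tau>"
  shows "(\<forall>X. maximal_guarded g A R X \<longrightarrow> (\<exists>p\<in>\<tau> ` A. lam p = X))
       \<and> (\<forall>X. gaifman_clique A R X \<longrightarrow> guarded g A R X)"
proof -
  have in_bag: "\<exists>m\<in>A. X \<subseteq> lam (\<tau> m)" if clique: "gaifman_clique A R X" for X
  proof -
    have "finite X"
      using clique assms(2) by (auto simp: gaifman_clique_def intro: finite_subset)
    then show ?thesis using finite_gaifman_clique_in_bag[OF assms(3) _ clique] by blast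
  qed
  have "\<exists>p\<in>\<tau> ` A. lam p = X" if max: "maximal_guarded g A R X" for X
  proof -
    have "gaifman_clique A R X"
      using max guarded_imp_gaifman_clique unfolding maximal_guarded_def by blast
    then obtain m where "m \<in> A" "X \<subseteq> lam (\<tau> m)" using in_bag by blast
    moreover have "guarded g A R (lam (\<tau> m))"
      using decomposition_bag_guarded[OF assms(3) \<open>m \<in> A\<close>] .
    ultimately show ?thesis using max unfolding maximal_guarded_def by blast
  qed
  moreover have "guarded g A R X" if clique: "gaifman_clique A R X" for X
  proof -
    obtain m where "m \<in> A" "X \<subseteq> lam (\<tau> m)" using in_bag[OF clique] by blast
    moreover have "X \<noteq> {}" using clique by (simp add: gaifman_clique_def)
    ultimately show ?thesis using guarded_subset decomposition_bag_guarded[OF assms(3)] by blast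
  qed
  ultimately show ?thesis by blast
qed

end
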